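(* Let $s,t\in\mathbb{R}$ with $s\ne0$, $s^2+4t>0$, and $q=\varphi'_{s,t}/\varphi_{s,t}\ne1$. Let $p$ be a $q$-periodic function, i.e. $p(qy)=p(y)$ for all $y$ in its domain (in the paper $p(x)=G(\log_q(x))$ with $G$ periodic of period one). Let $0\le a<b$ and let $f$ be $(s,t)$-integrable on $[0,r]$ for $r\in\{a,b\}$ and continuous at $0$. Then $$\int_a^b p(x)f(x)\,d_{s,t}x=p\!\left(\frac{b}{\varphi_{s,t}}\right)\int_0^b f(x)\,d_{s,t}x-p\!\left(\frac{a}{\varphi_{s,t}}\right)\int_0^a f(x)\,d_{s,t}x,$$ where for $a=0$ the second term is interpreted as $0$.
   Context: $\varphi_{s,t}=\frac{s+\sqrt{s^2+4t}}{2}$, $\varphi'_{s,t}=\frac{s-\sqrt{s^2+4t}}{2}$. If $0<\lvert q\rvert<1$, $\int_a^b f(x)\,d_{s,t}x=(1-q)\sum_{n=0}^\infty\big[bf(bq^n/\varphi_{s,t})-af(aq^n/\varphi_{s,t})\big]q^n$; if $\lvert q\rvert>1$, $\int_a^b f(x)\,d_{s,t}x=(1-q)\sum_{n=0}^\infty\big[bf(bq^{-n}/\varphi'_{s,t})-af(aq^{-n}/\varphi'_{s,t})\big]q^{-n}$. In particular $\int_0^r f\,d_{s,t}x$ is the corresponding series with only the $r$-terms. "$(s,t)$-integrable on $[0,r]$" means this series converges. *)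

theory Defs
  imports Complex_Main
begin

definition phi :: "real \<Rightarrow> real \<Rightarrow> real" where
  "phi s t = (s + sqrt (s^2 + 4*t)) / 2"

definition phi' :: "real \<Rightarrow> real \<Rightarrow> real" where
  "phi' s t = (s - sqrt (s^2 + 4*t)) / 2"

definition qst :: "real \<Rightarrow> real \<Rightarrow> real" where
  "qst s t = phi' s t / phi s t"

definition st_integral :: "real \<Rightarrow> real \<Rightarrow> (real \<Rightarrow> real) \<Rightarrow> real \<Rightarrow> real \<Rightarrow> real" where
  "st_integral s t f a b =
     (let q = qst s t in
      if \<bar>q\<bar> < 1 then
        (1 - q) * (\<Sum>n. (b * f (b * q^n / phi s t) - a * f (a * q^n / phi s t)) * q^n)
      else
        (1 - q) * (\<Sum>n. (b * f (b * inverse q ^ n / phi' s t)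
                          - a * f (a * inverse q ^ n / phi' s t)) * inverse q ^ n))"

definition st_integrable :: "real \<Rightarrow> real \<Rightarrow> (real \<Rightarrow> real) \<Rightarrow> real \<Rightarrow> bool" where
  "st_integrable s t f r =
     (let q = qst s t in
      if \<bar>q\<bar> < 1 then summable (\<lambda>n. r * f (r * q^n / phi s t) * q^n)
      else summable (\<lambda>n. r * f (r * inverse q ^ n / phi' s t) * inverse q ^ n))"

end

theory Submission
  imports Defs
begin

text \<open>Every node of the series defining the (s,t)-integral over [0,r] lies in the orbit of
  r / phi s t under multiplication by q = qst s t.  A q-periodic factor p is therefore constant
  along the nodes and can be pulled out of each of the two series, term by term.\<close>

lemma periodic_power:
  fixes p :: "'a::field \<Rightarrow> 'b"
  assumes "\<forall>y. y \<noteq> 0 \<longrightarrow> p (c * y) = p y" and "c \<noteq> 0"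
  shows "p (c ^ n * y) = p y"
proof (induction n)
  case 0
  show ?case by simp
next
  case (Suc n)
  show ?case
  proof (cases "y = 0")
    case False
    then have "p (c * (c ^ n * y)) = p (c ^ n * y)"
      using assms by simp
    then show ?thesis
      using Suc by (simp add: mult.assoc)
  qed simp
qed

lemma periodic_inverse:
  fixes p :: "'a::field \<Rightarrow> 'b"
  assumes "\<forall>y. y \<noteq> 0 \<longrightarrow> p (c * y) = p y" and "c \<noteq> 0"
  shows "\<forall>y. y \<noteq> 0 \<longrightarrow> p (inverse c * y) = p y"
proof (intro allI impI)
  fix y :: 'a
  assume "y \<noteq> 0"
  then have "p (c * (inverse c * y)) = p (inverse c * y)"
    using assms by simp
  moreover have "c * (inverse c * y) = y"
    using \<open>c \<noteq> 0\<close> by (simp add: mult.assoc[symmetric])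
  ultimately show "p (inverse c * y) = p y"
    by simp
qed

definition st_node :: "real \<Rightarrow> real \<Rightarrow> nat \<Rightarrow> real" where
  "st_node s t n =
     (if \<bar>qst s t\<bar> < 1 then qst s t ^ n / phi s t else inverse (qst s t) ^ n / phi' s t)"

definition st_weight :: "real \<Rightarrow> real \<Rightarrow> nat \<Rightarrow> real" where
  "st_weight s t n = (if \<bar>qst s t\<bar> < 1 then qst s t ^ n else inverse (qst s t) ^ n)"

lemma st_integral_eq_suminf:
  "st_integral s t f a b =
     (1 - qst s t) * (\<Sum>n. (b * f (b * st_node s t n) - a * f (a * st_node s t n)) * st_weight s t n)"
  by (simp add: st_integral_def st_node_def st_weight_def Let_def)

lemma st_integrable_iff_summable:
  "st_integrable s t f r \<longleftrightarrow> summable (\<lambda>n. r * f (r * st_node s t n) * st_weight s t n)"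
  by (simp add: st_integrable_def st_node_def st_weight_def Let_def)

lemma periodic_at_st_node:
  assumes per: "\<forall>y. y \<noteq> 0 \<longrightarrow> p (qst s t * y) = p y"
  shows "p (r * st_node s t n) * st_weight s t n = p (r / phi s t) * st_weight s t n"
proof (cases "\<bar>qst s t\<bar> < 1")
  case True
  \<comment> \<open>For q = 0 the nodes past the first collapse to 0, where periodicity says nothing;
    there the weight vanishes instead.\<close>
  show ?thesis
  proof (cases "qst s t = 0 \<and> n > 0")
    case False
    then have "n = 0 \<or> qst s t \<noteq> 0"
      by auto
    then have "p (qst s t ^ n * (r / phi s t)) = p (r / phi s t)"
      using periodic_power[OF per] by (metis power_0 mult_1)
    moreover have "r * st_node s t n = qst s t ^ n * (r / phi s t)"
      using True by (simp add: st_node_def)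
    ultimately show ?thesis
      by simp
  qed (simp add: st_weight_def)
next
  case False
  define q where "q = qst s t"
  have "q \<noteq> 0"
    using False q_def by auto
  then have "phi s t \<noteq> 0" and "phi' s t = q * phi s t"
    by (auto simp: q_def qst_def)
  then have "r * st_node s t n = inverse q ^ Suc n * (r / phi s t)"
    using False \<open>q \<noteq> 0\<close> by (simp add: st_node_def q_def field_simps)
  moreover have "\<forall>y. y \<noteq> 0 \<longrightarrow> p (inverse q * y) = p y"
    using periodic_inverse[of p q] per \<open>q \<noteq> 0\<close> q_def by simp
  then have "p (inverse q ^ Suc n * (r / phi s t)) = p (r / phi s t)"
    using periodic_power \<open>q \<noteq> 0\<close> by (metis inverse_nonzero_iff_nonzero)
  ultimately show ?thesis
    by simp
qed

theorem mainTheorem5: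
  fixes s t a b :: real and p f :: "real \<Rightarrow> real"
  assumes "s \<noteq> 0" and "s^2 + 4*t > 0" and "qst s t \<noteq> 1"
    and "\<forall>y. y \<noteq> 0 \<longrightarrow> p (qst s t * y) = p y"
    and "0 \<le> a" and "a < b"
    and "st_integrable s t f a" and "st_integrable s t f b"
    and "isCont f 0"
  shows "st_integral s t (\<lambda>x. p x * f x) a b
           = p (b / phi s t) * st_integral s t f 0 b - p (a / phi s t) * st_integral s t f 0 a"
proof -
  \<comment> \<open>The identity holds term by term, so only periodicity and the two convergences are used.\<close>
  let ?x = "st_node s t" and ?w = "st_weight s t"
  let ?A = "\<lambda>n. a * f (a * ?x n) * ?w n" and ?B = "\<lambda>n. b * f (b * ?x n) * ?w n"
  have "summable ?A" and "summable ?B"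
    using assms(7,8) by (simp_all add: st_integrable_iff_summable)
  have terms: "(b * (p (b * ?x n) * f (b * ?x n)) - a * (p (a * ?x n) * f (a * ?x n))) * ?w n
      = p (b / phi s t) * ?B n - p (a / phi s t) * ?A n" for n
  proof -
    have "(b * (p (b * ?x n) * f (b * ?x n)) - a * (p (a * ?x n) * f (a * ?x n))) * ?w n
        = b * f (b * ?x n) * (p (b * ?x n) * ?w n) - a * f (a * ?x n) * (p (a * ?x n) * ?w n)"
      by (simp add: algebra_simps)
    then show ?thesis
      by (simp add: periodic_at_st_node[OF assms(4)])
  qed
  have "st_integral s t (\<lambda>x. p x * f x) a b
      = (1 - qst s t) * (\<Sum>n. p (b / phi s t) * ?B n - p (a / phi s t) * ?A n)"
    by (simp only: st_integral_eq_suminf terms)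
  also have "(\<Sum>n. p (b / phi s t) * ?B n - p (a / phi s t) * ?A n)
      = p (b / phi s t) * suminf ?B - p (a / phi s t) * suminf ?A"
    using suminf_diff[OF summable_mult summable_mult, OF \<open>summable ?B\<close> \<open>summable ?A\<close>]
      suminf_mult[OF \<open>summable ?B\<close>] suminf_mult[OF \<open>summable ?A\<close>]
    by simp
  finally show ?thesis
    by (simp add: st_integral_eq_suminf algebra_simps)
qed

end
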